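(* Let $T$ be a tree with exactly three pendant vertices $u_1,u_2,u_3$ and let $m$ be its major vertex, with $d(u_1,m)\equiv 0$, $d(u_2,m)\equiv 2$ and $d(u_3,m)\equiv 0\pmod 3$. Then $1$ is an eigenvalue of $L(T)$.
   Context: $L(T)=D(T)-A(T)$ is the Laplacian matrix of $T$. A pendant vertex has degree $1$; a major vertex has degree at least $3$. $d$ denotes distance. *)

theory Defs
  imports Complex_Main
begin

definition simple_graph :: "'a set \<Rightarrow> ('a \<Rightarrow> 'a \<Rightarrow> bool) \<Rightarrow> bool" where
  "simple_graph V E \<longleftrightarrow> finite V \<and> (\<forall>u v. E u v \<longrightarrow> u \<in> V \<and> v \<in> V)
     \<and> (\<forall>u v. E u v \<longrightarrow> E v u) \<and> (\<forall>v. \<not> E v v)"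

definition is_walk :: "'a set \<Rightarrow> ('a \<Rightarrow> 'a \<Rightarrow> bool) \<Rightarrow> 'a list \<Rightarrow> bool" where
  "is_walk V E p \<longleftrightarrow> p \<noteq> [] \<and> set p \<subseteq> V \<and> (\<forall>i. Suc i < length p \<longrightarrow> E (p ! i) (p ! Suc i))"

definition connected_graph :: "'a set \<Rightarrow> ('a \<Rightarrow> 'a \<Rightarrow> bool) \<Rightarrow> bool" where
  "connected_graph V E \<longleftrightarrow> V \<noteq> {} \<and>
     (\<forall>u\<in>V. \<forall>v\<in>V. \<exists>p. is_walk V E p \<and> hd p = u \<and> last p = v)"

definition is_cycle :: "'a set \<Rightarrow> ('a \<Rightarrow> 'a \<Rightarrow> bool) \<Rightarrow> 'a list \<Rightarrow> bool" where
  "is_cycle V E p \<longleftrightarrow> is_walk V E p \<and> distinct p \<and> length p \<ge> 3 \<and> E (last p) (hd p)"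

definition is_tree :: "'a set \<Rightarrow> ('a \<Rightarrow> 'a \<Rightarrow> bool) \<Rightarrow> bool" where
  "is_tree V E \<longleftrightarrow> simple_graph V E \<and> connected_graph V E \<and> (\<nexists>p. is_cycle V E p)"

definition degree :: "'a set \<Rightarrow> ('a \<Rightarrow> 'a \<Rightarrow> bool) \<Rightarrow> 'a \<Rightarrow> nat" where
  "degree V E v = card {w \<in> V. E v w}"

definition gdist :: "'a set \<Rightarrow> ('a \<Rightarrow> 'a \<Rightarrow> bool) \<Rightarrow> 'a \<Rightarrow> 'a \<Rightarrow> nat" where
  "gdist V E u v = (LEAST n. \<exists>p. is_walk V E p \<and> hd p = u \<and> last p = v \<and> length p = Suc n)"

definition laplacian_apply :: "'a set \<Rightarrow> ('a \<Rightarrow> 'a \<Rightarrow> bool) \<Rightarrow> ('a \<Rightarrow> real) \<Rightarrow> 'a \<Rightarrow> real" where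
  "laplacian_apply V E x v = real (degree V E v) * x v - (\<Sum>w\<in>{w \<in> V. E v w}. x w)"

definition laplacian_eigenvalue :: "'a set \<Rightarrow> ('a \<Rightarrow> 'a \<Rightarrow> bool) \<Rightarrow> real \<Rightarrow> bool" where
  "laplacian_eigenvalue V E lam \<longleftrightarrow>
     (\<exists>x. (\<exists>v\<in>V. x v \<noteq> 0) \<and> (\<forall>v\<in>V. laplacian_apply V E x v = lam * x v))"

end

theory Submission
  imports Defs
begin

text \<open>Root the tree at the major vertex \<open>m\<close>. Below every vertex other than \<open>m\<close>
  hangs a leaf on the same branch at \<open>m\<close>, so with only three leaves \<open>m\<close> has exactly
  three neighbours and every other vertex has at most one child: the tree is a spider with three
  legs. At a vertex of degree two and depth \<open>k\<close> on a leg, the eigenvalue-1 equation reads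
  \<open>x(k) = x(k - 1) + x(k + 1)\<close>, which the 6-periodic sequence \<open>1, 1, 0, -1, -1, 0, \<dots>\<close>
  solves. Taking this sequence on the legs of \<open>u\<^sub>1\<close> and \<open>u\<^sub>3\<close>, and shifted
  by one on the leg of \<open>u\<^sub>2\<close>, also satisfies the equation at \<open>m\<close>
  (\<open>3 \<cdot> 1 - (1 + 1 + 0) = 1\<close>). The equation at a leaf asks the sequence to vanish at
  the neighbour of the leaf, and that is exactly the congruence on the length of its leg.\<close>

section \<open>Walks and distances\<close>

lemma is_walk_iff_successively:
  "is_walk V E p \<longleftrightarrow> p \<noteq> [] \<and> set p \<subseteq> V \<and> successively E p"
  unfolding is_walk_def successively_conv_nth by auto

lemma is_walk_rev:
  assumes "\<And>u v. E u v \<Longrightarrow> E v u" and "is_walk V E p"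
  shows "is_walk V E (rev p)"
proof -
  have "successively (\<lambda>x y. E y x) p = successively E p"
    using assms(1) by (intro successively_cong) auto
  then show ?thesis
    using assms(2) by (simp add: is_walk_iff_successively)
qed

lemma is_walk_append_tl:
  assumes "is_walk V E p" and "is_walk V E q" and "last p = hd q"
  shows "is_walk V E (p @ tl q)"
  using assms
  by (cases q) (auto simp: is_walk_iff_successively successively_append_iff successively_Cons)

lemma is_walk_snoc:
  assumes "is_walk V E p" and "E (last p) w" and "w \<in> V"
  shows "is_walk V E (p @ [w])"
  using assms by (auto simp: is_walk_iff_successively successively_append_iff)

lemma is_walk_take:
  assumes "is_walk V E p" and "k < length p"
  shows "is_walk V E (take (Suc k) p)"
proof -
  have "successively E (take (Suc k) p)"
    using assms(1) successively_append_iff[of E "take (Suc k) p" "drop (Suc k) p"]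
    by (simp add: is_walk_iff_successively)
  then show ?thesis
    using assms set_take_subset[of "Suc k" p] by (auto simp: is_walk_iff_successively)
qed

lemma is_walk_distinct_subwalk:
  assumes "is_walk V E p"
  shows "\<exists>q. is_walk V E q \<and> distinct q \<and> hd q = hd p \<and> last q = last p \<and> set q \<subseteq> set p"
  using assms
proof (induction "length p" arbitrary: p rule: less_induct)
  case less
  show ?case
  proof (cases "distinct p")
    case True
    then show ?thesis using less.prems by blast
  next
    case False
    then obtain xs ys zs y where p: "p = xs @ [y] @ ys @ [y] @ zs"
      using not_distinct_decomp by blast
    let ?p' = "xs @ [y] @ zs"
    have "is_walk V E ?p'"
      using less.prems unfolding p is_walk_iff_successively
      by (auto simp: successively_append_iff successively_Cons)
    moreover have "length ?p' < length p" using p by simp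
    ultimately obtain q where q: "is_walk V E q" "distinct q" "hd q = hd ?p'" "last q = last ?p'"
        "set q \<subseteq> set ?p'"
      using less.hyps by blast
    have "hd ?p' = hd p" using p by (cases xs) simp_all
    moreover have "last ?p' = last p" using p by (cases zs) simp_all
    moreover have "set ?p' \<subseteq> set p" using p by auto
    ultimately show ?thesis using q by (metis order_trans)
  qed
qed

lemma gdist_le_length:
  assumes "is_walk V E p" and "hd p = u" and "last p = v"
  shows "gdist V E u v \<le> length p - 1"
proof -
  have "p \<noteq> []" using assms(1) by (simp add: is_walk_def)
  then have "\<exists>q. is_walk V E q \<and> hd q = u \<and> last q = v \<and> length q = Suc (length p - 1)"
    using assms by auto
  then show ?thesis unfolding gdist_def by (rule Least_le)
qed

lemma shortest_walk_exists:
  assumes "connected_graph V E" and "u \<in> V" and "v \<in> V"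
  shows "\<exists>p. is_walk V E p \<and> hd p = u \<and> last p = v \<and> length p = Suc (gdist V E u v)"
proof -
  obtain p where p: "is_walk V E p" "hd p = u" "last p = v"
    using assms unfolding connected_graph_def by blast
  then have "p \<noteq> []" by (simp add: is_walk_def)
  with p have "\<exists>q. is_walk V E q \<and> hd q = u \<and> last q = v \<and> length q = Suc (length p - 1)"
    by auto
  then show ?thesis unfolding gdist_def by (rule LeastI)
qed

lemma gdist_commute:
  assumes "\<And>u v. E u v \<Longrightarrow> E v u"
  shows "gdist V E u v = gdist V E v u"
proof -
  have rev: "\<exists>q. is_walk V E q \<and> hd q = y \<and> last q = x \<and> length q = Suc n"
    if "is_walk V E p \<and> hd p = x \<and> last p = y \<and> length p = Suc n" for p x y n
    using that is_walk_rev[OF assms] by (intro exI[of _ "rev p"]) (auto simp: hd_rev last_rev)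
  have "(\<exists>p. is_walk V E p \<and> hd p = u \<and> last p = v \<and> length p = Suc n) \<longleftrightarrow>
        (\<exists>p. is_walk V E p \<and> hd p = v \<and> last p = u \<and> length p = Suc n)" for n
    using rev by blast
  then show ?thesis unfolding gdist_def by simp
qed

section \<open>Depth, parent and branch in a rooted tree\<close>

locale rooted_tree =
  fixes V :: "'a set" and E :: "'a \<Rightarrow> 'a \<Rightarrow> bool" and r :: 'a
  assumes tree: "is_tree V E" and root_in_V: "r \<in> V"
begin

lemma adj_sym: "E u v \<Longrightarrow> E v u"
  using tree by (simp add: is_tree_def simple_graph_def)

lemma adj_irrefl: "\<not> E v v"
  using tree by (simp add: is_tree_def simple_graph_def)

lemma adj_in_V: "E u v \<Longrightarrow> u \<in> V \<and> v \<in> V"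
  using tree by (simp add: is_tree_def simple_graph_def)

lemma finite_V: "finite V"
  using tree by (simp add: is_tree_def simple_graph_def)

lemma no_cycle: "\<not> is_cycle V E p"
  using tree by (simp add: is_tree_def)

abbreviation depth :: "'a \<Rightarrow> nat" where
  "depth v \<equiv> gdist V E r v"

lemma shortest_walk_from_root:
  "v \<in> V \<Longrightarrow> \<exists>p. is_walk V E p \<and> hd p = r \<and> last p = v \<and> length p = Suc (depth v)"
  using tree root_in_V by (simp add: is_tree_def shortest_walk_exists)

lemma depth_root [simp]: "depth r = 0"
  using gdist_le_length[of V E "[r]" r r] root_in_V by (simp add: is_walk_def)

lemma depth_eq_0_iff:
  assumes "v \<in> V"
  shows "depth v = 0 \<longleftrightarrow> v = r"
proof
  assume "depth v = 0"
  moreover obtain p where "is_walk V E p" "hd p = r" "last p = v" "length p = Suc (depth v)"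
    using shortest_walk_from_root[OF assms] by blast
  ultimately show "v = r" by (cases p) auto
qed simp

lemma depth_adj_le:
  assumes "E v w"
  shows "depth w \<le> depth v + 1"
proof -
  obtain p where p: "is_walk V E p" "hd p = r" "last p = v" "length p = Suc (depth v)"
    using shortest_walk_from_root[of v] adj_in_V[OF assms] by blast
  have "is_walk V E (p @ [w])"
    using is_walk_snoc[OF p(1)] p(3) adj_in_V[OF assms] assms by simp
  moreover have "hd (p @ [w]) = r" using p(1,2) by (simp add: is_walk_def)
  ultimately have "depth w \<le> length (p @ [w]) - 1"
    using gdist_le_length by (metis last_snoc)
  then show ?thesis using p(4) by simp
qed

lemma depth_nth_le:
  assumes "is_walk V E p" and "hd p = r" and "k < length p"
  shows "depth (p ! k) \<le> k"
proof -
  have hd: "hd (take (Suc k) p) = r" using assms(2) by simp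
  have last: "last (take (Suc k) p) = p ! k"
    using assms(3) by (simp add: take_Suc_conv_app_nth)
  show ?thesis
    using gdist_le_length[OF is_walk_take[OF assms(1,3)] hd last] assms(3) by simp
qed

lemma depth_mem_shortest_walk:
  assumes "is_walk V E p" "hd p = r" "last p = w" "length p = Suc (depth w)" and "v \<in> set p"
  shows "depth v < depth w \<or> v = w"
proof -
  obtain k where k: "k < length p" "v = p ! k"
    using assms(5) by (auto simp: in_set_conv_nth)
  have "depth v \<le> k" using depth_nth_le assms k by blast
  moreover have "p ! depth w = w"
    using last_conv_nth[of p] assms(3,4) by (cases p) simp_all
  ultimately show ?thesis using k assms(4) by (cases "k = depth w") auto
qed

text \<open>Acyclicity enters only here: a walk between two neighbours of \<open>v\<close> avoiding \<open>v\<close>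
  would close a cycle through \<open>v\<close>.\<close>

lemma common_neighbour_on_walk:
  assumes "E v w1" "E v w2" "w1 \<noteq> w2"
    and "is_walk V E p" "hd p = w1" "last p = w2"
  shows "v \<in> set p"
proof (rule ccontr)
  assume v: "v \<notin> set p"
  obtain q where q: "is_walk V E q" "distinct q" "hd q = w1" "last q = w2" "set q \<subseteq> set p"
    using is_walk_distinct_subwalk[OF assms(4)] assms(5,6) by auto
  then obtain q' where q': "q = w1 # q'" by (cases q) (auto simp: is_walk_def)
  then have "q' \<noteq> []" using q assms(3) by auto
  have "is_walk V E (v # q)"
    using q(1) q' assms(1) adj_in_V by (auto simp: is_walk_iff_successively successively_Cons)
  moreover have "distinct (v # q)" using q(2,5) v by auto
  moreover have "3 \<le> length (v # q)" using q' \<open>q' \<noteq> []\<close> by (cases q') auto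
  moreover have "E (last (v # q)) (hd (v # q))" using q(4) q' assms(2) adj_sym by simp
  ultimately have "is_cycle V E (v # q)" by (simp add: is_cycle_def)
  then show False using no_cycle by blast
qed

lemma lower_neighbour_unique:
  assumes "E v w1" "E v w2" "depth w1 < depth v" "depth w2 \<le> depth v"
  shows "w1 = w2"
proof (rule ccontr)
  assume ne: "w1 \<noteq> w2"
  obtain p1 where p1: "is_walk V E p1" "hd p1 = r" "last p1 = w1" "length p1 = Suc (depth w1)"
    using shortest_walk_from_root adj_in_V assms(1) by blast
  obtain p2 where p2: "is_walk V E p2" "hd p2 = r" "last p2 = w2" "length p2 = Suc (depth w2)"
    using shortest_walk_from_root adj_in_V assms(2) by blast
  have "v \<notin> set p1" using depth_mem_shortest_walk[OF p1] assms(3) by fastforce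
  moreover have "v \<notin> set p2"
    using depth_mem_shortest_walk[OF p2] assms(2,4) adj_irrefl by fastforce
  ultimately have avoid: "v \<notin> set (rev p1 @ tl p2)"
    by (cases p2) auto
  have "p1 \<noteq> []" "p2 \<noteq> []" using p1 p2 by auto
  then have "is_walk V E (rev p1 @ tl p2)" "hd (rev p1 @ tl p2) = w1"
    using is_walk_append_tl[OF is_walk_rev[OF adj_sym p1(1)] p2(1)] p1 p2
    by (simp_all add: last_rev hd_rev)
  moreover have "last (rev p1 @ tl p2) = w2"
  proof (cases "tl p2 = []")
    case True
    then have "p2 = [r]" using \<open>p2 \<noteq> []\<close> p2(2) by (cases p2) auto
    then show ?thesis using True p1(2) p2(3) \<open>p1 \<noteq> []\<close> by (simp add: last_rev)
  next
    case False
    then show ?thesis using p2(3) by (simp add: last_tl)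
  qed
  ultimately show False
    using common_neighbour_on_walk[OF assms(1,2) ne] avoid by blast
qed

lemma lower_neighbour_exists:
  assumes "v \<in> V" "v \<noteq> r"
  shows "\<exists>w. E v w \<and> depth w + 1 = depth v"
proof -
  obtain p where p: "is_walk V E p" "hd p = r" "last p = v" "length p = Suc (depth v)"
    using shortest_walk_from_root assms(1) by blast
  obtain k where k: "depth v = Suc k"
    using depth_eq_0_iff assms by (cases "depth v") auto
  define w where "w = p ! k"
  have "p ! Suc k = v" using last_conv_nth[of p] p(3,4) k by (cases p) simp_all
  moreover have "E (p ! k) (p ! Suc k)"
    using p(1) p(4) k unfolding is_walk_def by simp
  ultimately have "E w v" unfolding w_def by simp
  moreover have "depth w \<le> k"
    using depth_nth_le[OF p(1,2)] p(4) k unfolding w_def by simp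
  ultimately have "E v w" "depth w + 1 = depth v"
    using depth_adj_le[of w v] adj_sym k by auto
  then show ?thesis by blast
qed

lemma depth_adj:
  assumes "E v w"
  shows "depth w + 1 = depth v \<or> depth w = depth v + 1"
proof -
  have "depth v \<noteq> depth w"
  proof
    assume eq: "depth v = depth w"
    have "v \<noteq> r"
      using eq assms adj_in_V adj_irrefl depth_eq_0_iff by fastforce
    then obtain u where "E v u" "depth u + 1 = depth v"
      using lower_neighbour_exists adj_in_V assms by blast
    then show False
      using lower_neighbour_unique[of v u w] assms eq by simp
  qed
  then show ?thesis using depth_adj_le[OF assms] depth_adj_le[OF adj_sym[OF assms]] by linarith
qed

definition parent :: "'a \<Rightarrow> 'a" where
  "parent v = (SOME w. E v w \<and> depth w + 1 = depth v)"

lemma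
  assumes "v \<in> V" "v \<noteq> r"
  shows adj_parent: "E v (parent v)" and depth_parent: "depth (parent v) + 1 = depth v"
  using someI_ex[OF lower_neighbour_exists[OF assms]] unfolding parent_def by auto

lemma parent_eqI:
  assumes "E v w" "depth w + 1 = depth v"
  shows "parent v = w"
proof -
  have v: "v \<in> V" "v \<noteq> r" using assms adj_in_V by auto
  show ?thesis
    using lower_neighbour_unique[OF adj_parent[OF v] assms(1)] depth_parent[OF v] assms(2) by simp
qed

lemma parent_in_V: "v \<in> V \<Longrightarrow> v \<noteq> r \<Longrightarrow> parent v \<in> V"
  using adj_parent adj_in_V by blast

abbreviation neighbours :: "'a \<Rightarrow> 'a set" where
  "neighbours v \<equiv> {w \<in> V. E v w}"

abbreviation leaves :: "'a set" where
  "leaves \<equiv> {v \<in> V. degree V E v = 1}"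

definition branch :: "'a \<Rightarrow> 'a" where
  "branch v = (parent ^^ (depth v - 1)) v"

lemma funpow_parent:
  assumes "v \<in> V" "k \<le> depth v"
  shows "(parent ^^ k) v \<in> V \<and> depth ((parent ^^ k) v) = depth v - k"
  using assms(2)
proof (induction k)
  case (Suc k)
  let ?u = "(parent ^^ k) v"
  have u: "?u \<in> V" "depth ?u = depth v - k" using Suc by auto
  then have "?u \<noteq> r" using Suc.prems by auto
  then show ?case using adj_parent[OF u(1)] depth_parent[OF u(1)] parent_in_V[OF u(1)] u by auto
qed (use assms(1) in simp)

lemma branch_adj_root:
  assumes "v \<in> V" "v \<noteq> r"
  shows "branch v \<in> V" "depth (branch v) = 1" "E r (branch v)"
proof -
  have "depth v \<noteq> 0" using depth_eq_0_iff assms by simp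
  then show b: "branch v \<in> V" "depth (branch v) = 1"
    using funpow_parent[OF assms(1), of "depth v - 1"] unfolding branch_def by auto
  then have "branch v \<noteq> r" by auto
  then have "E (branch v) (parent (branch v))" "depth (parent (branch v)) = 0"
    using adj_parent[OF b(1)] depth_parent[OF b(1)] b(2) by auto
  moreover have "parent (branch v) = r"
    using calculation adj_in_V depth_eq_0_iff by blast
  ultimately show "E r (branch v)" using adj_sym by simp
qed

lemma branch_depth_1 [simp]: "depth v = 1 \<Longrightarrow> branch v = v"
  by (simp add: branch_def)

lemma branch_parent:
  assumes "v \<in> V" "2 \<le> depth v"
  shows "branch (parent v) = branch v"
proof -
  obtain n where n: "depth v = Suc (Suc n)"
    using assms(2) by (metis add_2_eq_Suc le_Suc_ex)
  then have "v \<noteq> r" by auto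
  then have "depth (parent v) = Suc n" using depth_parent[OF assms(1)] n by simp
  then show ?thesis using n by (simp add: branch_def funpow_Suc_right del: funpow.simps)
qed

lemma branch_child:
  assumes "E v c" "depth c = depth v + 1" "v \<noteq> r"
  shows "branch c = branch v"
proof -
  have "v \<in> V" "c \<in> V" using adj_in_V assms(1) by auto
  then have "2 \<le> depth c" using depth_eq_0_iff[of v] assms(2,3) by simp
  moreover have "parent c = v" using parent_eqI adj_sym assms(1,2) by simp
  ultimately show ?thesis using branch_parent \<open>c \<in> V\<close> by metis
qed

lemma leaf_below:
  assumes "c \<in> V" "c \<noteq> r"
  obtains l k where "l \<in> leaves" "(parent ^^ k) l = c" "depth l = depth c + k" "branch l = branch c"
proof -
  define S where "S = {w \<in> V. \<exists>k. (parent ^^ k) w = c \<and> depth w = depth c + k}"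
  have "finite S" using finite_V by (simp add: S_def)
  moreover have "c \<in> S" using assms(1) by (auto simp: S_def intro: exI[of _ 0])
  ultimately have "Max (depth ` S) \<in> depth ` S" by (intro Max_in) auto
  then obtain l where "l \<in> S" and l_max: "depth l = Max (depth ` S)" by auto
  then obtain k where l: "l \<in> V" "(parent ^^ k) l = c" "depth l = depth c + k"
    by (auto simp: S_def)
  have "l \<noteq> r" using l depth_eq_0_iff assms by auto
  have "neighbours l = {parent l}"
  proof (intro equalityI subsetI)
    fix y assume y: "y \<in> neighbours l"
    show "y \<in> {parent l}"
    proof (rule ccontr)
      assume "y \<notin> {parent l}"
      then have deeper: "depth y = depth l + 1"
        using depth_adj[of l y] parent_eqI[of l y] y by auto
      then have "parent y = l" using parent_eqI[of y l] adj_sym y by simp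
      then have "(parent ^^ Suc k) y = c"
        using l(2) by (simp add: funpow_Suc_right del: funpow.simps)
      then have "y \<in> S" using deeper l(3) y by (auto simp: S_def)
      then have "depth y \<le> depth l" using l_max \<open>finite S\<close> by simp
      then show False using deeper by simp
    qed
  qed (use adj_parent parent_in_V l(1) \<open>l \<noteq> r\<close> in auto)
  then have "l \<in> leaves" using l(1) by (simp add: degree_def)
  moreover have "depth c - 1 + k = depth l - 1"
    using l(3) depth_eq_0_iff[OF assms(1)] assms(2) by simp
  then have "branch l = branch c"
    using l(2) funpow_add[of "depth c - 1" k parent] by (simp add: branch_def)
  ultimately show ?thesis using that l by blast
qed

section \<open>Trees whose leaves lie on distinct branches\<close>

lemma branch_image_leaves: "branch ` (leaves - {r}) = neighbours r"
proof (intro equalityI subsetI)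
  fix w assume "w \<in> branch ` (leaves - {r})"
  then show "w \<in> neighbours r" using branch_adj_root by auto
next
  fix w assume w: "w \<in> neighbours r"
  then have "w \<noteq> r" using adj_irrefl by auto
  moreover have "depth w = 1" using depth_adj[of r w] w by simp
  moreover obtain l k where l: "l \<in> leaves" "depth l = depth w + k" "branch l = branch w"
    using leaf_below[of w] w \<open>w \<noteq> r\<close> by blast
  ultimately have "l \<in> leaves - {r}" "branch l = w" by auto
  then show "w \<in> branch ` (leaves - {r})" by blast
qed

lemma branch_bij_betw_leaves:
  assumes "card leaves \<le> degree V E r"
  shows "bij_betw branch leaves (neighbours r)"
proof -
  have fin: "finite leaves" using finite_V by simp
  have "card (neighbours r) \<le> card (leaves - {r})"
    using card_image_le[of "leaves - {r}" branch] fin branch_image_leaves by simp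
  moreover have "card (leaves - {r}) \<le> card leaves" by (rule card_Diff1_le)
  moreover have "card leaves \<le> card (neighbours r)" using assms by (simp add: degree_def)
  ultimately have card_eq: "card (leaves - {r}) = card leaves" "card (neighbours r) = card leaves"
    by linarith+
  then have "r \<notin> leaves" using card_Diff1_less_iff[of leaves r] fin by linarith
  then have image: "branch ` leaves = neighbours r" using branch_image_leaves by simp
  have "inj_on branch leaves"
    by (rule eq_card_imp_inj_on[OF fin]) (subst image, rule card_eq(2))
  with image show ?thesis by (simp add: bij_betw_def)
qed

lemma child_unique:
  assumes "inj_on branch leaves" "v \<noteq> r"
    and "E v c1" "depth c1 = depth v + 1" "E v c2" "depth c2 = depth v + 1"
  shows "c1 = c2"
proof -
  have c: "c1 \<in> V" "c1 \<noteq> r" "c2 \<in> V" "c2 \<noteq> r"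
    using adj_in_V assms(3-6) by auto
  obtain l1 k1 where l1: "l1 \<in> leaves" "(parent ^^ k1) l1 = c1" "depth l1 = depth c1 + k1"
      "branch l1 = branch c1"
    using leaf_below[OF c(1,2)] by blast
  obtain l2 k2 where l2: "l2 \<in> leaves" "(parent ^^ k2) l2 = c2" "depth l2 = depth c2 + k2"
      "branch l2 = branch c2"
    using leaf_below[OF c(3,4)] by blast
  have "branch c1 = branch v" "branch c2 = branch v"
    using branch_child assms(2-6) by blast+
  then have "branch l1 = branch l2" using l1(4) l2(4) by simp
  then have "l1 = l2" using inj_onD[OF assms(1)] l1(1) l2(1) by blast
  moreover have "k1 = k2" using l1(3) l2(3) assms(4,6) calculation by simp
  ultimately show ?thesis using l1(2) l2(2) by simp
qed

lemma neighbours_cases: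
  assumes "inj_on branch leaves" "v \<in> V" "v \<noteq> r"
  obtains "neighbours v = {parent v}"
    | c where "neighbours v = {parent v, c}" "E v c" "depth c = depth v + 1"
proof -
  define C where "C = {c \<in> neighbours v. depth c = depth v + 1}"
  have "neighbours v \<subseteq> insert (parent v) C"
  proof
    fix w assume w: "w \<in> neighbours v"
    then have "depth w + 1 = depth v \<or> depth w = depth v + 1" using depth_adj[of v w] by simp
    then show "w \<in> insert (parent v) C" using parent_eqI[of v w] w by (auto simp: C_def)
  qed
  moreover have "parent v \<in> neighbours v"
    using adj_parent[OF assms(2,3)] parent_in_V[OF assms(2,3)] by simp
  ultimately have nbrs: "neighbours v = insert (parent v) C" by (auto simp: C_def)
  show ?thesis
  proof (cases "C = {}")
    case True
    then show ?thesis using nbrs that(1) by simp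
  next
    case False
    then obtain c where c: "c \<in> C" by blast
    then have child: "E v c" "depth c = depth v + 1" by (simp_all add: C_def)
    have "c' = c" if "c' \<in> C" for c'
      using child_unique[OF assms(1,3) _ _ child] that by (simp add: C_def)
    then have "C = {c}" using c by blast
    then show ?thesis using nbrs child that(2) by simp
  qed
qed

end

section \<open>An eigenvector for the eigenvalue 1\<close>

fun profile :: "nat \<Rightarrow> real" where
  "profile 0 = 1"
| "profile (Suc 0) = 1"
| "profile (Suc (Suc k)) = profile (Suc k) - profile k"

lemma profile_add_3: "profile (k + 3) = - profile k"
  by (simp add: numeral_3_eq_3)

lemma profile_eq_0: "k mod 3 = 2 \<Longrightarrow> profile k = 0"
proof (induction k rule: less_induct)
  case (less k)
  show ?case
  proof (cases "k < 3")
    case True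
    then have "k = 2" using less.prems by simp
    then show ?thesis by (simp add: numeral_2_eq_2)
  next
    case False
    then obtain j where j: "k = j + 3" by (metis add.commute le_Suc_ex not_less)
    then have "profile j = 0" using less by simp
    then show ?thesis using j profile_add_3 by simp
  qed
qed

context rooted_tree
begin

definition profile_vector :: "'a \<Rightarrow> 'a \<Rightarrow> real" where
  "profile_vector b v = profile (depth v + of_bool (branch v = b))"

lemma branch_root [simp]: "branch r = r"
  by (simp add: branch_def)

lemma profile_vector_parent:
  assumes "b \<noteq> r" "v \<in> V" "v \<noteq> r"
  shows "profile_vector b (parent v) = profile (depth v - 1 + of_bool (branch v = b))"
proof (cases "2 \<le> depth v")
  case True
  moreover have "depth (parent v) = depth v - 1" using depth_parent[OF assms(2,3)] by simp
  ultimately show ?thesis using branch_parent[OF assms(2)] by (simp add: profile_vector_def)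
next
  case False
  then have "depth v = 1" using depth_eq_0_iff[OF assms(2)] assms(3) by simp
  then have "depth (parent v) = 0" using depth_parent[OF assms(2,3)] by simp
  then have "parent v = r" using depth_eq_0_iff parent_in_V[OF assms(2,3)] by simp
  then show ?thesis using \<open>depth v = 1\<close> assms(1) by (simp add: profile_vector_def)
qed

lemma laplacian_profile_vector_root:
  assumes "neighbours r = {b, b', b''}" "b \<noteq> b'" "b \<noteq> b''" "b' \<noteq> b''"
  shows "laplacian_apply V E (profile_vector b) r = profile_vector b r"
proof -
  have "depth w = 1" "branch w = w" "w \<noteq> r" if "w \<in> neighbours r" for w
    using that depth_adj[of r w] adj_irrefl by auto
  then have "profile_vector b b = 0" "profile_vector b b' = 1" "profile_vector b b'' = 1"
      "profile_vector b r = 1"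
    using assms by (auto simp: profile_vector_def numeral_2_eq_2)
  then show ?thesis using assms by (simp add: laplacian_apply_def degree_def)
qed

lemma laplacian_profile_vector_leaf:
  assumes "b \<noteq> r" "v \<in> V" "v \<noteq> r" "neighbours v = {parent v}"
    and "(depth v + of_bool (branch v = b)) mod 3 = 0"
  shows "laplacian_apply V E (profile_vector b) v = profile_vector b v"
proof -
  obtain n where n: "depth v + of_bool (branch v = b) = Suc n"
    using depth_eq_0_iff[OF assms(2)] assms(3) by (cases "depth v") auto
  then have "depth v - 1 + of_bool (branch v = b) = n"
    using depth_eq_0_iff[OF assms(2)] assms(3) by (cases "branch v = b") auto
  moreover have "n mod 3 = 2" using assms(5) n by (simp add: mod_Suc split: if_splits)
  ultimately have "profile_vector b (parent v) = 0"
    using profile_vector_parent[OF assms(1-3)] profile_eq_0 by simp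
  then show ?thesis using assms(4) by (simp add: laplacian_apply_def degree_def)
qed

lemma laplacian_profile_vector_path:
  assumes "b \<noteq> r" "v \<in> V" "v \<noteq> r" "neighbours v = {parent v, c}"
    and "E v c" "depth c = depth v + 1"
  shows "laplacian_apply V E (profile_vector b) v = profile_vector b v"
proof -
  have "parent v \<noteq> c" using depth_parent[OF assms(2,3)] assms(6) by auto
  moreover have "branch c = branch v" using branch_child assms(3,5,6) by blast
  moreover obtain j where j: "depth v + of_bool (branch v = b) = Suc j"
    using depth_eq_0_iff[OF assms(2)] assms(3) by (cases "depth v") auto
  moreover have "depth v - 1 + of_bool (branch v = b) = j"
    using j depth_eq_0_iff[OF assms(2)] assms(3) by (cases "branch v = b") auto
  ultimately show ?thesis
    using assms(4,6) profile_vector_parent[OF assms(1-3)]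
    by (simp add: laplacian_apply_def degree_def profile_vector_def)
qed

lemma laplacian_eigenvalue_1_spider:
  assumes "inj_on branch leaves"
    and "neighbours r = {b, b', b''}" "b \<noteq> b'" "b \<noteq> b''" "b' \<noteq> b''"
    and "\<And>l. l \<in> leaves \<Longrightarrow> (depth l + of_bool (branch l = b)) mod 3 = 0"
  shows "laplacian_eigenvalue V E 1"
  unfolding laplacian_eigenvalue_def
proof (intro exI conjI)
  have "b \<noteq> r" using assms(2) adj_irrefl by blast
  show "\<forall>v\<in>V. laplacian_apply V E (profile_vector b) v = 1 * profile_vector b v"
  proof
    fix v assume v: "v \<in> V"
    show "laplacian_apply V E (profile_vector b) v = 1 * profile_vector b v"
    proof (cases "v = r")
      case True
      then show ?thesis using laplacian_profile_vector_root[OF assms(2-5)] by simp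
    next
      case False
      then show ?thesis
      proof (cases rule: neighbours_cases[OF assms(1) v False])
        case 1
        from v 1 have "v \<in> leaves" by (simp add: degree_def)
        then show ?thesis
          using laplacian_profile_vector_leaf[OF \<open>b \<noteq> r\<close> v False 1] assms(6) by simp
      next
        case (2 c)
        then show ?thesis using laplacian_profile_vector_path[OF \<open>b \<noteq> r\<close> v False] by simp
      qed
    qed
  qed
  show "\<exists>v\<in>V. profile_vector b v \<noteq> 0"
    using root_in_V \<open>b \<noteq> r\<close> by (intro bexI[of _ r]) (simp_all add: profile_vector_def)
qed

end

theorem mainTheorem7:
  fixes V :: "'a set" and E :: "'a \<Rightarrow> 'a \<Rightarrow> bool" and u1 u2 u3 m :: 'a
  assumes "is_tree V E"
    and "u1 \<noteq> u2" "u1 \<noteq> u3" "u2 \<noteq> u3"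
    and "{v \<in> V. degree V E v = 1} = {u1, u2, u3}"
    and "m \<in> V" "degree V E m \<ge> 3"
    and "gdist V E u1 m mod 3 = 0"
    and "gdist V E u2 m mod 3 = 2"
    and "gdist V E u3 m mod 3 = 0"
  shows "laplacian_eigenvalue V E 1"
proof -
  interpret rooted_tree V E m
    using assms(1,6) by unfold_locales
  have leaves: "leaves = {u1, u2, u3}" using assms(5) .
  then have "card leaves \<le> degree V E m" using assms(2-4,7) by simp
  then have "bij_betw branch leaves (neighbours m)" by (rule branch_bij_betw_leaves)
  then have inj: "inj_on branch leaves" and nbrs: "neighbours m = {branch u2, branch u1, branch u3}"
    using leaves by (auto simp: bij_betw_def)
  have distinct: "branch u2 \<noteq> branch u1" "branch u2 \<noteq> branch u3" "branch u1 \<noteq> branch u3"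
    using inj_onD[OF inj] leaves assms(2-4) by blast+
  have "depth u1 mod 3 = 0" "(depth u2 + 1) mod 3 = 0" "depth u3 mod 3 = 0"
    using assms(8-10) gdist_commute[of E V _ m, OF adj_sym] by (simp_all add: mod_Suc)
  then have "(depth l + of_bool (branch l = branch u2)) mod 3 = 0" if "l \<in> {u1, u2, u3}" for l
    using that distinct by auto
  then show ?thesis
    using laplacian_eigenvalue_1_spider[OF inj nbrs distinct] unfolding leaves by blast
qed

end
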